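(* In the setting in the context, let $$U(D)=\exp\left\{-\frac{\lambda S}{N}\left(1+\frac{\mu}{B\mu-\mu}e^{-B\mu D}-\frac{B\mu}{B\mu-\mu}e^{-\mu D}\right)\right\}$$ be the upper bound on the deadline violation probability under the BETA policy. In the short deadline regime $D\to 0$ (i.e. $\mu D\to 0$ and $B\mu D\to 0$), $U(D)=\exp\{-\frac{\lambda S}{2N}B\mu^2D^2+o(D^2)\}$, so the task computation time lower bound $t_{\mathrm D}$ follows the Rayleigh distribution $$\Pr\{t_{\mathrm D}<D\}=1-e^{-\frac{\lambda S}{2N}B\mu^2D^2},$$ the deadline violation probability upper bound is $1-\Pr\{t_{\mathrm D}<D\}$ for deadline $D$, and the mean computation delay is $\mathbb E[t_{\mathrm D}]=\sqrt{\frac{N\pi}{2\lambda B S\mu^2}}$.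
   Context: Model. Roads of total length $S$ carry vehicles with density $\lambda$; the number of vehicles is Poisson with mean $\lambda S$. There are $B\neq 1$ RSUs. Each vehicle meets any given RSU after an exponential time of rate $\mu$, independently and memorylessly. A task-RSU holds $N$ tasks with common deadline $D$; at each vehicle meeting with the task-RSU an unfinished task is replicated on that vehicle, and a replica's output is returned when the carrying vehicle next meets any of the $B$ RSUs; a task is finished when one replica returns. Tasks are assigned by the BETA policy (always replicate an unfinished task with the fewest replicas). It has been established that under this policy the deadline violation probability is at most $U(D)$. *)

theory Defs
  imports "HOL-Analysis.Analysis" "HOL-Library.Landau_Symbols"
begin

text \<open>Upper bound U(D) on the deadline violation probability under BETA,
  with parameters lam (vehicle density), S (road length), N (tasks),
  B (number of RSUs), mu (meeting rate).\<close>
definition U_bound :: "real \<Rightarrow> real \<Rightarrow> nat \<Rightarrow> nat \<Rightarrow> real \<Rightarrow> real \<Rightarrow> real" where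
  "U_bound lam S N B mu D =
     exp (- (lam * S / real N) *
          (1 + mu / (real B * mu - mu) * exp (- real B * mu * D)
             - real B * mu / (real B * mu - mu) * exp (- mu * D)))"

definition tD_cdf :: "real \<Rightarrow> real \<Rightarrow> nat \<Rightarrow> nat \<Rightarrow> real \<Rightarrow> real \<Rightarrow> real" where
  "tD_cdf lam S N B mu D =
     (if D \<le> 0 then 0 else 1 - exp (- (lam * S / (2 * real N)) * real B * mu\<^sup>2 * D\<^sup>2))"

definition tD_pdf :: "real \<Rightarrow> real \<Rightarrow> nat \<Rightarrow> nat \<Rightarrow> real \<Rightarrow> real \<Rightarrow> real" where
  "tD_pdf lam S N B mu D =
     (if D \<le> 0 then 0 else
        2 * (lam * S / (2 * real N)) * real B * mu\<^sup>2 * D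
          * exp (- (lam * S / (2 * real N)) * real B * mu\<^sup>2 * D\<^sup>2))"

end

theory Submission
  imports Defs "HOL-Real_Asymp.Real_Asymp" "HOL-Probability.Probability"
begin

text \<open>
  Writing a = B mu and b = mu, the exponent of U(D) is -(lam S/N) times
  1 + b/(a-b) exp(-aD) - a/(a-b) exp(-bD), whose Taylor expansion at D = 0 has no
  constant or linear term and has quadratic term a b D^2/2; this is the Rayleigh law
  with rate c = lam S B mu^2/(2N). Its mean, the integral of 2c x^2 exp(-c x^2) over
  [0, oo), becomes the second Gaussian moment under the substitution y = sqrt c x.
\<close>

lemma exp_minus_taylor2_remainder_smallo:
  fixes a :: real
  shows "(\<lambda>D. exp (-(a*D)) - 1 + a*D - (a*D)\<^sup>2/2) \<in> o[at 0](\<lambda>D. D\<^sup>2)"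
proof (cases "a = 0")
  case True
  then show ?thesis by simp
next
  case False
  have remainder: "(\<lambda>x::real. exp (-x) - 1 + x - x\<^sup>2/2) \<in> o[at 0](\<lambda>x. x\<^sup>2)"
    by real_asymp
  have "filterlim (\<lambda>D::real. a*D) (at 0) (at 0)"
  proof (rule filterlim_atI)
    show "((*) a \<longlongrightarrow> 0) (at 0)" by (auto intro!: tendsto_eq_intros)
    show "\<forall>\<^sub>F D in at 0. a * D \<noteq> 0" using False by (auto simp: eventually_at_filter)
  qed
  from landau_o.small.compose[OF remainder this]
  have "(\<lambda>D. exp (-(a*D)) - 1 + a*D - (a*D)\<^sup>2/2) \<in> o[at 0](\<lambda>D. (a*D)\<^sup>2)" .
  then show ?thesis using False by (simp add: power_mult_distrib)
qed

lemma exp_combination_taylor2_smallo: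
  fixes a b :: real
  assumes "a \<noteq> b"
  shows "(\<lambda>D. 1 + b/(a-b) * exp (-(a*D)) - a/(a-b) * exp (-(b*D)) - a*b/2 * D\<^sup>2)
           \<in> o[at 0](\<lambda>D. D\<^sup>2)"
proof -
  define R where "R x D = exp (-(x*D)) - 1 + x*D - (x*D)\<^sup>2/2" for x D :: real
  have "(\<lambda>D. b * R a D - a * R b D) \<in> o[at 0](\<lambda>D. D\<^sup>2)"
    using exp_minus_taylor2_remainder_smallo[of a] exp_minus_taylor2_remainder_smallo[of b]
    unfolding R_def by (intro sum_in_smallo) auto
  then have "(\<lambda>D. 1/(a-b) * (b * R a D - a * R b D)) \<in> o[at 0](\<lambda>D. D\<^sup>2)"
    using cmult_in_smallo_iff[of "1/(a-b)" "\<lambda>D. b * R a D - a * R b D"] by blast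
  moreover have "1/(a-b) * (b * R a D - a * R b D)
      = 1 + b/(a-b) * exp (-(a*D)) - a/(a-b) * exp (-(b*D)) - a*b/2 * D\<^sup>2" for D
  proof -
    have "b * R a D - a * R b D
        = (a-b) * (1 - a*b/2 * D\<^sup>2) + (b * exp (-(a*D)) - a * exp (-(b*D)))"
      unfolding R_def by (simp add: field_simps power2_eq_square)
    also have "1/(a-b) * \<dots> = 1 - a*b/2 * D\<^sup>2 + (b * exp (-(a*D)) - a * exp (-(b*D))) / (a-b)"
      using assms by (simp add: distrib_left)
    finally show ?thesis by (simp add: diff_divide_distrib)
  qed
  ultimately show ?thesis by simp
qed

lemma U_bound_short_deadline:
  assumes "B \<noteq> 1" and "mu \<noteq> 0"
  shows "\<exists>g. g \<in> o[at 0](\<lambda>D. D\<^sup>2) \<and>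
           (\<forall>D. U_bound lam S N B mu D
                 = exp (- (lam * S / (2 * real N)) * real B * mu\<^sup>2 * D\<^sup>2 + g D))"
proof -
  define a where "a = real B * mu"
  define K where "K = lam * S / real N"
  define r where "r D = 1 + mu/(a-mu) * exp (-(a*D)) - a/(a-mu) * exp (-(mu*D)) - a*mu/2 * D\<^sup>2"
    for D
  have "a \<noteq> mu" using assms by (simp add: a_def)
  then have "r \<in> o[at 0](\<lambda>D. D\<^sup>2)"
    unfolding r_def by (rule exp_combination_taylor2_smallo)
  then have "(\<lambda>D. -K * r D) \<in> o[at 0](\<lambda>D. D\<^sup>2)"
    using cmult_in_smallo_iff[of "-K"] by blast
  moreover have "\<forall>D. U_bound lam S N B mu D
      = exp (- (lam * S / (2 * real N)) * real B * mu\<^sup>2 * D\<^sup>2 + -K * r D)"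
  proof
    fix D
    have "U_bound lam S N B mu D = exp (-K * (a*mu/2 * D\<^sup>2 + r D))"
      unfolding U_bound_def r_def K_def a_def by simp
    also have "-K * (a*mu/2 * D\<^sup>2 + r D)
        = - (lam * S / (2 * real N)) * real B * mu\<^sup>2 * D\<^sup>2 + -K * r D"
      unfolding K_def a_def by (simp add: algebra_simps power2_eq_square)
    finally show "U_bound lam S N B mu D
      = exp (- (lam * S / (2 * real N)) * real B * mu\<^sup>2 * D\<^sup>2 + -K * r D)" .
  qed
  ultimately show ?thesis by (intro exI[of _ "\<lambda>D. -K * r D"] conjI)
qed

lemma rayleigh_cdf_has_derivative:
  fixes c D :: real
  assumes "D > 0"
  shows "((\<lambda>x. if x \<le> 0 then 0 else 1 - exp (- c * x\<^sup>2))
           has_real_derivative 2 * c * D * exp (- c * D\<^sup>2)) (at D)"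
proof (rule has_field_derivative_transform_within_open[where S = "{0<..}"])
  show "((\<lambda>x. 1 - exp (- c * x\<^sup>2)) has_real_derivative 2 * c * D * exp (- c * D\<^sup>2)) (at D)"
    by (auto intro!: derivative_eq_intros)
  show "D \<in> {0<..}" using assms by simp
qed simp_all

lemma rayleigh_mean:
  fixes c :: real
  assumes "c > 0"
  shows "((\<lambda>x. x * (2 * c * x * exp (- c * x\<^sup>2))) has_integral sqrt (pi / (4 * c))) {0..}"
proof -
  define k where "k = sqrt c"
  have k: "k > 0" "k\<^sup>2 = c" using assms by (simp_all add: k_def)
  have moment: "has_bochner_integral lborel
      (\<lambda>y::real. indicator {0..} y *\<^sub>R (exp (- y\<^sup>2) * y\<^sup>2)) (sqrt pi / 4)"
    using gaussian_moment_even_pos[of 1] by simp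
  have "has_bochner_integral lborel
      (\<lambda>x::real. indicator {0..} (k*x) *\<^sub>R (exp (- (k*x)\<^sup>2) * (k*x)\<^sup>2)) ((sqrt pi / 4) /\<^sub>R k)"
    using lborel_has_bochner_integral_real_affine_iff[of k _ "sqrt pi / 4" 0] moment k
    by simp
  then have "has_bochner_integral lborel
      (\<lambda>x::real. 2 * (indicator {0..} (k*x) *\<^sub>R (exp (- (k*x)\<^sup>2) * (k*x)\<^sup>2)))
      (2 * ((sqrt pi / 4) /\<^sub>R k))"
    by (rule has_bochner_integral_mult_right)
  moreover have "(\<lambda>x::real. 2 * (indicator {0..} (k*x) *\<^sub>R (exp (- (k*x)\<^sup>2) * (k*x)\<^sup>2)))
      = (\<lambda>x. if x \<in> {0..} then x * (2 * c * x * exp (- c * x\<^sup>2)) else 0)"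
    using k by (auto simp: fun_eq_iff indicator_def zero_le_mult_iff power_mult_distrib power2_eq_square)
  moreover have "2 * ((sqrt pi / 4) /\<^sub>R k) = sqrt (pi / (4 * c))"
  proof -
    have "2 * ((sqrt pi / 4) /\<^sub>R k) = sqrt pi / (2 * k)"
      using k by (simp add: field_simps)
    also have "\<dots> = sqrt (pi / (4 * c))"
      using assms by (simp add: k_def real_sqrt_divide real_sqrt_mult)
    finally show ?thesis .
  qed
  ultimately have bochner: "has_bochner_integral lborel
      (\<lambda>x. if x \<in> {0..} then x * (2 * c * x * exp (- c * x\<^sup>2)) else 0) (sqrt (pi / (4 * c)))"
    by (simp only:)
  from has_integral_integral_lborel[OF integrable.intros[OF bochner]]
  show ?thesis
    unfolding has_bochner_integral_integral_eq[OF bochner] has_integral_restrict_UNIV .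
qed

lemma tD_cdf_eq_rayleigh:
  "tD_cdf lam S N B mu
     = (\<lambda>x. if x \<le> 0 then 0 else 1 - exp (- (lam * S / (2 * real N) * real B * mu\<^sup>2) * x\<^sup>2))"
  by (simp add: tD_cdf_def fun_eq_iff)

lemma tD_pdf_eq_rayleigh:
  assumes "D > 0"
  shows "tD_pdf lam S N B mu D
     = 2 * (lam * S / (2 * real N) * real B * mu\<^sup>2) * D
         * exp (- (lam * S / (2 * real N) * real B * mu\<^sup>2) * D\<^sup>2)"
  using assms by (simp add: tD_pdf_def)

theorem corollary1:
  fixes lam S mu :: real and N B :: nat
  assumes "lam > 0" and "S > 0" and "mu > 0" and "N > 0" and "B > 0" and "B \<noteq> 1"
  shows "(\<exists>g. g \<in> o[at 0](\<lambda>D. D\<^sup>2) \<and>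
           (\<forall>D. U_bound lam S N B mu D
                 = exp (- (lam * S / (2 * real N)) * real B * mu\<^sup>2 * D\<^sup>2 + g D))) \<and>
         (\<forall>D>0. 1 - tD_cdf lam S N B mu D
                 = exp (- (lam * S / (2 * real N)) * real B * mu\<^sup>2 * D\<^sup>2)) \<and>
         (\<forall>D>0. (tD_cdf lam S N B mu has_real_derivative tD_pdf lam S N B mu D) (at D)) \<and>
         (((\<lambda>D. D * tD_pdf lam S N B mu D) has_integral
           sqrt (real N * pi / (2 * lam * real B * S * mu\<^sup>2))) {0..})"
proof (intro conjI allI impI)
  define c where "c = lam * S / (2 * real N) * real B * mu\<^sup>2"
  have "c > 0" using assms by (simp add: c_def)
  show "\<exists>g. g \<in> o[at 0](\<lambda>D. D\<^sup>2) \<and>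
      (\<forall>D. U_bound lam S N B mu D
            = exp (- (lam * S / (2 * real N)) * real B * mu\<^sup>2 * D\<^sup>2 + g D))"
    using assms by (intro U_bound_short_deadline) auto
  show "1 - tD_cdf lam S N B mu D = exp (- (lam * S / (2 * real N)) * real B * mu\<^sup>2 * D\<^sup>2)"
    if "D > 0" for D
    using that by (simp add: tD_cdf_def)
  show "(tD_cdf lam S N B mu has_real_derivative tD_pdf lam S N B mu D) (at D)"
    if "D > 0" for D
    using rayleigh_cdf_has_derivative[OF that, of c]
    unfolding tD_cdf_eq_rayleigh tD_pdf_eq_rayleigh[OF that] c_def .
  have pdf_eq: "D * (2 * c * D * exp (- c * D\<^sup>2)) = D * tD_pdf lam S N B mu D"
    if "D \<in> {0..}" for D
  proof (cases "D = 0")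
    case False
    with that have "D > 0" by simp
    then show ?thesis by (simp only: tD_pdf_eq_rayleigh c_def)
  qed simp
  have "((\<lambda>D. D * tD_pdf lam S N B mu D) has_integral sqrt (pi / (4 * c))) {0..}"
    using has_integral_cong[OF pdf_eq] rayleigh_mean[OF \<open>c > 0\<close>] by (rule iffD1)
  moreover have "pi / (4 * c) = real N * pi / (2 * lam * real B * S * mu\<^sup>2)"
    using assms by (simp add: c_def field_simps)
  ultimately show "((\<lambda>D. D * tD_pdf lam S N B mu D) has_integral
      sqrt (real N * pi / (2 * lam * real B * S * mu\<^sup>2))) {0..}"
    by (simp only:)
qed

end
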